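(* For every positive integer $q$ there exists an integer $N_1(q)$ such that for every $n \ge N_1(q)$, every $n$-optimal $q$-configuration is non-attacking.
   Context: For $n \in \mathbb{N}$ let $I_n = \{\lfloor (2-n)/2 \rfloor, \lfloor (2-n)/2\rfloor + 1, \ldots, \lfloor n/2 \rfloor\}$ (a set of $n$ consecutive integers) and let the board be $\mathcal{B}_n = I_n \times I_n$. A configuration (of Queens) is a finite set $\mathcal{C} \subset \mathbb{Z}\times\mathbb{Z}$; it is a $q$-configuration if $|\mathcal{C}| = q$. For a square $Q=(x,y)$, its attacked set is $A(Q) = \{(x+i,y),(x,y+i),(x+i,y+i),(x+i,y-i) : i \in \mathbb{Z}\setminus\{0\}\}$, and $A(\mathcal{C}) = \bigcup_{Q\in\mathcal{C}} A(Q)$. The cover of $\mathcal{C}$ on $\mathcal{B}_n$ is $\mathrm{cover}_n(\mathcal{C}) = |(\mathcal{C}\cup A(\mathcal{C}))\cap \mathcal{B}_n|$. A $q$-configuration $\mathcal{C}\subset\mathcal{B}_n$ is $n$-optimal if $\mathrm{cover}_n(\mathcal{C}') \le \mathrm{cover}_n(\mathcal{C})$ for every $q$-configuration $\mathcal{C}'\subset \mathcal{B}_n$. A configuration $\mathcal{C}$ is non-attacking if $Q' \notin A(Q)$ for all distinct $Q, Q' \in \mathcal{C}$. *)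

theory Defs
  imports Main
begin

type_synonym square = "int \<times> int"

definition I_set :: "nat \<Rightarrow> int set" where
  "I_set n = {(2 - int n) div 2 .. int n div 2}"

definition board :: "nat \<Rightarrow> square set" where
  "board n = I_set n \<times> I_set n"

definition attacked :: "square \<Rightarrow> square set" where
  "attacked Q = (case Q of (x, y) \<Rightarrow>
     {(x + i, y) | i. i \<noteq> 0} \<union> {(x, y + i) | i. i \<noteq> 0} \<union>
     {(x + i, y + i) | i. i \<noteq> 0} \<union> {(x + i, y - i) | i. i \<noteq> 0})"

definition attacked_set :: "square set \<Rightarrow> square set" where
  "attacked_set C = (\<Union>Q\<in>C. attacked Q)"

definition cover :: "nat \<Rightarrow> square set \<Rightarrow> nat" where
  "cover n C = card ((C \<union> attacked_set C) \<inter> board n)"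

definition optimal :: "nat \<Rightarrow> nat \<Rightarrow> square set \<Rightarrow> bool" where
  "optimal n q C \<longleftrightarrow> finite C \<and> card C = q \<and> C \<subseteq> board n \<and>
     (\<forall>C'. finite C' \<and> card C' = q \<and> C' \<subseteq> board n \<longrightarrow> cover n C' \<le> cover n C)"

definition non_attacking :: "square set \<Rightarrow> bool" where
  "non_attacking C \<longleftrightarrow> (\<forall>Q\<in>C. \<forall>Q'\<in>C. Q \<noteq> Q' \<longrightarrow> Q' \<notin> attacked Q)"

end

theory Submission
  imports Defs
begin

(* Each queen covers exactly the board squares on its four lines (row, column, diagonal,
   anti-diagonal), so a q-configuration covers the union of at most 4q lines, each meeting
   the board in at most n squares.  Two queens attacking each other share a line, so then at
   most 4q - 1 distinct lines remain and the cover is at most (4q - 1) n.  On the other hand,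
   q pairwise non-attacking queens near the centre, e.g. at (i, 2i) for i < q, span 4q distinct
   lines, each meeting the board in n - O(q) squares, and two distinct lines share at most one
   square; so their cover is at least 4qn - O(q^2).  Once n is large compared with q^2 this
   exceeds (4q - 1) n, so an attacking configuration cannot be optimal. *)

datatype direction = Horizontal | Vertical | Diagonal | Antidiagonal

lemma UNIV_direction: "(UNIV :: direction set) = {Horizontal, Vertical, Diagonal, Antidiagonal}"
  using direction.exhaust by auto

instance direction :: finite
  by standard (simp add: UNIV_direction)

lemma ex_direction:
  "(\<exists>d. P d) \<longleftrightarrow> P Horizontal \<or> P Vertical \<or> P Diagonal \<or> P Antidiagonal"
  by (metis UNIV_I UNIV_direction insertE singletonD)

lemma card_UNIV_direction: "card (UNIV :: direction set) = 4"
  by (simp add: UNIV_direction)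

fun level :: "direction \<Rightarrow> square \<Rightarrow> int" where
  "level Horizontal (x, y) = y"
| "level Vertical (x, y) = x"
| "level Diagonal (x, y) = x - y"
| "level Antidiagonal (x, y) = x + y"

definition queen_line :: "direction \<Rightarrow> square \<Rightarrow> square set" where
  "queen_line d Q = {P. level d P = level d Q}"

lemma attacked_iff: "P \<in> attacked Q \<longleftrightarrow> P \<noteq> Q \<and> (\<exists>d. P \<in> queen_line d Q)"
proof -
  obtain x y a b where PQ: "P = (x, y)" "Q = (a, b)" by fastforce
  have shift: "x' = a' + i \<longleftrightarrow> i = x' - a'" for x' a' i :: int by auto
  have "P \<in> attacked Q \<longleftrightarrow> P \<noteq> Q \<and> (y = b \<or> x = a \<or> x - y = a - b \<or> x + y = a + b)"
    unfolding PQ attacked_def by (auto simp: shift)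
  also have "\<dots> \<longleftrightarrow> P \<noteq> Q \<and> (\<exists>d. P \<in> queen_line d Q)"
    by (simp add: PQ queen_line_def ex_direction)
  finally show ?thesis .
qed

lemma queen_line_eqI: "P \<in> queen_line d Q \<Longrightarrow> queen_line d P = queen_line d Q"
  by (simp add: queen_line_def)

lemma queen_line_self: "Q \<in> queen_line d Q"
  by (simp add: queen_line_def)

fun line_point :: "direction \<Rightarrow> square \<Rightarrow> int \<Rightarrow> square" where
  "line_point Horizontal (a, b) t = (t, b)"
| "line_point Vertical (a, b) t = (a, t)"
| "line_point Diagonal (a, b) t = (t, t - a + b)"
| "line_point Antidiagonal (a, b) t = (t, a + b - t)"

definition line_coord :: "direction \<Rightarrow> square \<Rightarrow> int" where
  "line_coord d P = (if d = Vertical then snd P else fst P)"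

lemma line_point_in_queen_line: "line_point d Q t \<in> queen_line d Q"
  by (cases d; cases Q) (simp_all add: queen_line_def)

lemma line_coord_line_point [simp]: "line_coord d (line_point d Q t) = t"
  by (cases d; cases Q) (simp_all add: line_coord_def)

lemma line_point_line_coord:
  "P \<in> queen_line d Q \<Longrightarrow> line_point d Q (line_coord d P) = P"
  by (cases d; cases Q; cases P) (auto simp: queen_line_def line_coord_def)

lemma crossing_queen_lines_meet_at_most_once:
  assumes "d \<noteq> d'" "P \<in> queen_line d Q \<inter> queen_line d' Q'" "P' \<in> queen_line d Q \<inter> queen_line d' Q'"
  shows "P = P'"
  using assms by (cases d; cases d'; cases P; cases P') (auto simp: queen_line_def)

lemma queen_line_ne_other_direction:
  assumes "d \<noteq> d'"
  shows "queen_line d Q \<noteq> queen_line d' Q'"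
proof
  assume eq: "queen_line d Q = queen_line d' Q'"
  have "line_point d Q t \<in> queen_line d Q \<inter> queen_line d' Q'" for t
    using eq line_point_in_queen_line[of d Q t] by simp
  then have "line_point d Q 0 = line_point d Q 1"
    using crossing_queen_lines_meet_at_most_once[OF assms] by blast
  then show False
    by (metis line_coord_line_point zero_neq_one)
qed

lemma distinct_queen_lines_meet_at_most_once:
  assumes "queen_line d Q \<noteq> queen_line d' Q'"
    and "P \<in> queen_line d Q \<inter> queen_line d' Q'" "P' \<in> queen_line d Q \<inter> queen_line d' Q'"
  shows "P = P'"
proof (cases "d = d'")
  case True
  then show ?thesis
    using assms queen_line_eqI by (metis IntD1 IntD2)
next
  case False
  then show ?thesis
    using assms(2,3) by (rule crossing_queen_lines_meet_at_most_once)
qed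

definition queen_lines :: "square set \<Rightarrow> square set set" where
  "queen_lines C = case_prod queen_line ` (UNIV \<times> C)"

lemma Union_queen_lines: "\<Union>(queen_lines C) = C \<union> attacked_set C"
proof -
  have "insert Q (attacked Q) = (\<Union>d. queen_line d Q)" for Q
    using queen_line_self[of Q] by (auto simp: attacked_iff)
  then have "\<Union>(queen_lines C) = (\<Union>Q\<in>C. insert Q (attacked Q))"
    by (auto simp: queen_lines_def)
  then show ?thesis
    by (auto simp: attacked_set_def)
qed

lemma inj_on_queen_lines_iff: "inj_on (case_prod queen_line) (UNIV \<times> C) \<longleftrightarrow> non_attacking C"
proof
  assume inj: "inj_on (case_prod queen_line) (UNIV \<times> C)"
  show "non_attacking C"
    unfolding non_attacking_def
  proof (intro ballI impI)
    fix Q Q' assume "Q \<in> C" "Q' \<in> C" "Q \<noteq> Q'"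
    show "Q' \<notin> attacked Q"
    proof
      assume "Q' \<in> attacked Q"
      then obtain d where "Q' \<in> queen_line d Q"
        using attacked_iff by blast
      then have "case_prod queen_line (d, Q') = case_prod queen_line (d, Q)"
        by (simp add: queen_line_eqI)
      then show False
        using inj_onD[OF inj] \<open>Q \<in> C\<close> \<open>Q' \<in> C\<close> \<open>Q \<noteq> Q'\<close> by blast
    qed
  qed
next
  assume na: "non_attacking C"
  show "inj_on (case_prod queen_line) (UNIV \<times> C)"
  proof (rule inj_onI, clarify)
    fix d Q d' Q' assume "Q \<in> C" "Q' \<in> C" and eq: "queen_line d Q = queen_line d' Q'"
    then have "d = d'"
      using queen_line_ne_other_direction by blast
    moreover have "Q' \<in> queen_line d Q"
      using eq \<open>d = d'\<close> by (simp add: queen_line_def)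
    ultimately show "d = d' \<and> Q = Q'"
      using na \<open>Q \<in> C\<close> \<open>Q' \<in> C\<close> attacked_iff unfolding non_attacking_def by blast
  qed
qed

lemma card_queen_lines_le: "finite C \<Longrightarrow> card (queen_lines C) \<le> 4 * card C"
  using card_image_le[of "UNIV \<times> C" "case_prod queen_line"]
  by (simp add: queen_lines_def card_cartesian_product card_UNIV_direction)

lemma card_queen_lines_eq_iff:
  "finite C \<Longrightarrow> card (queen_lines C) = 4 * card C \<longleftrightarrow> non_attacking C"
  using inj_on_iff_eq_card[of "UNIV \<times> C" "case_prod queen_line"]
  by (simp add: queen_lines_def card_cartesian_product card_UNIV_direction inj_on_queen_lines_iff)

lemma card_I_set: "card (I_set n) = n"
proof -
  have "int n div 2 - (2 - int n) div 2 + 1 = int n" by presburger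
  then show ?thesis unfolding I_set_def by simp
qed

lemma finite_board: "finite (board n)"
  by (simp add: board_def I_set_def)

lemma in_I_set_if_abs_le: "2 * \<bar>x\<bar> + 1 \<le> int n \<Longrightarrow> x \<in> I_set n"
  unfolding I_set_def by auto

lemma card_queen_line_board_le: "card (queen_line d Q \<inter> board n) \<le> n"
proof -
  have "inj_on (line_coord d) (queen_line d Q \<inter> board n)"
    by (rule inj_on_inverseI[where g = "line_point d Q"]) (simp add: line_point_line_coord)
  moreover have "line_coord d ` (queen_line d Q \<inter> board n) \<subseteq> I_set n"
    by (auto simp: line_coord_def board_def)
  ultimately have "card (queen_line d Q \<inter> board n) \<le> card (I_set n)"
    by (rule card_inj_on_le) (simp add: I_set_def)
  then show ?thesis
    by (simp add: card_I_set)
qed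

lemma card_queen_line_board_ge:
  assumes "\<bar>fst Q\<bar> \<le> int r" "\<bar>snd Q\<bar> \<le> int r"
  shows "n \<le> card (queen_line d Q \<inter> board n) + 4 * r + 1"
proof -
  \<comment> \<open>parameters in [-m, m] give points in the central square of radius (n - 1) div 2\<close>
  define m where "m = (int n - 1) div 2 - 2 * int r"
  have "line_point d Q t \<in> board n" if "t \<in> {-m..m}" for t
  proof -
    obtain x y where xy: "line_point d Q t = (x, y)" by fastforce
    have "\<bar>x\<bar> \<le> \<bar>t\<bar> + 2 * int r" "\<bar>y\<bar> \<le> \<bar>t\<bar> + 2 * int r"
      using assms xy by (cases d; cases Q; auto)+
    moreover have "2 * (\<bar>t\<bar> + 2 * int r) + 1 \<le> int n"
      using that unfolding m_def by auto
    ultimately show ?thesis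
      unfolding xy board_def by (auto intro!: in_I_set_if_abs_le)
  qed
  then have "line_point d Q ` {-m..m} \<subseteq> queen_line d Q \<inter> board n"
    using line_point_in_queen_line by blast
  moreover have "inj_on (line_point d Q) {-m..m}"
    by (rule inj_on_inverseI[where g = "line_coord d"]) simp
  ultimately have "card {-m..m} \<le> card (queen_line d Q \<inter> board n)"
    using finite_board by (meson card_inj_on_le finite_Int)
  then show ?thesis
    unfolding m_def by simp
qed

lemma sum_card_le_card_UN_add_square:
  assumes "finite I" "\<And>i. i \<in> I \<Longrightarrow> finite (A i)"
    and "\<And>i j. i \<in> I \<Longrightarrow> j \<in> I \<Longrightarrow> i \<noteq> j \<Longrightarrow> card (A i \<inter> A j) \<le> 1"
  shows "(\<Sum>i\<in>I. card (A i)) \<le> card (\<Union>i\<in>I. A i) + card I * card I"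
  using assms
proof (induction I rule: finite_induct)
  case empty
  then show ?case by simp
next
  case (insert i I)
  let ?U = "\<Union>j\<in>I. A j"
  have "card (A i \<inter> ?U) \<le> (\<Sum>j\<in>I. card (A i \<inter> A j))"
    unfolding Int_UN_distrib by (rule card_UN_le) (rule insert.hyps)
  also have "\<dots> \<le> (\<Sum>j\<in>I. 1)"
  proof (rule sum_mono)
    fix j assume "j \<in> I"
    then show "card (A i \<inter> A j) \<le> 1"
      using insert.hyps(2) insert.prems(2) by (metis insertCI)
  qed
  finally have "card (A i \<inter> ?U) \<le> card I" by simp
  moreover have "card (A i) + card ?U = card (A i \<union> ?U) + card (A i \<inter> ?U)"
    using insert.prems(1) insert.hyps(1) by (intro card_Un_Int) auto
  moreover have "(\<Sum>j\<in>I. card (A j)) \<le> card ?U + card I * card I"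
    using insert.IH insert.prems by blast
  ultimately have "(\<Sum>j\<in>insert i I. card (A j)) \<le> card (A i \<union> ?U) + card I + card I * card I"
    using insert.hyps by simp
  also have "\<dots> \<le> card (\<Union>j\<in>insert i I. A j) + card (insert i I) * card (insert i I)"
    using insert.hyps by simp
  finally show ?case .
qed

lemma cover_eq_card_UN_queen_lines: "cover n C = card (\<Union>l\<in>queen_lines C. l \<inter> board n)"
  unfolding cover_def Union_queen_lines[symmetric] by (metis Int_commute Int_Union2)

lemma cover_le_card_queen_lines:
  assumes "finite C"
  shows "cover n C \<le> card (queen_lines C) * n"
proof -
  have fin: "finite (queen_lines C)"
    using assms by (simp add: queen_lines_def)
  have "cover n C = card (\<Union>l\<in>queen_lines C. l \<inter> board n)"
    by (rule cover_eq_card_UN_queen_lines)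
  also have "\<dots> \<le> (\<Sum>l\<in>queen_lines C. card (l \<inter> board n))"
    using fin by (rule card_UN_le)
  also have "\<dots> \<le> (\<Sum>l\<in>queen_lines C. n)"
    by (rule sum_mono) (auto simp: queen_lines_def card_queen_line_board_le)
  finally show ?thesis
    by simp
qed

lemma cover_attacking_le:
  assumes "finite C" "\<not> non_attacking C"
  shows "cover n C \<le> (4 * card C - 1) * n"
proof -
  have "card (queen_lines C) \<le> 4 * card C - 1"
    using card_queen_lines_le card_queen_lines_eq_iff assms by fastforce
  then show ?thesis
    using cover_le_card_queen_lines[OF assms(1)] by (meson le_trans mult_le_mono1)
qed

lemma cover_non_attacking_ge:
  assumes "finite C" "non_attacking C" "\<forall>Q\<in>C. \<bar>fst Q\<bar> \<le> int r \<and> \<bar>snd Q\<bar> \<le> int r"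
  shows "4 * card C * n \<le> cover n C + 4 * card C * (4 * r + 1) + 4 * card C * (4 * card C)"
proof -
  let ?L = "queen_lines C"
  have fin: "finite ?L"
    using assms(1) by (simp add: queen_lines_def)
  have card_L: "card ?L = 4 * card C"
    using card_queen_lines_eq_iff assms(1,2) by blast
  have "card ?L * n \<le> (\<Sum>l\<in>?L. card (l \<inter> board n) + (4 * r + 1))"
  proof -
    have "n \<le> card (l \<inter> board n) + (4 * r + 1)" if "l \<in> ?L" for l
      using that assms(3) card_queen_line_board_ge by (fastforce simp: queen_lines_def)
    then show ?thesis
      using sum_mono[of ?L "\<lambda>_. n"] by simp
  qed
  also have "\<dots> = (\<Sum>l\<in>?L. card (l \<inter> board n)) + card ?L * (4 * r + 1)"
    by (simp only: sum.distrib) simp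
  also have "(\<Sum>l\<in>?L. card (l \<inter> board n)) \<le> card (\<Union>l\<in>?L. l \<inter> board n) + card ?L * card ?L"
  proof (rule sum_card_le_card_UN_add_square)
    fix l l' assume "l \<in> ?L" "l' \<in> ?L" "l \<noteq> l'"
    moreover obtain d Q d' Q' where "l = queen_line d Q" "l' = queen_line d' Q'"
      using \<open>l \<in> ?L\<close> \<open>l' \<in> ?L\<close> by (auto simp: queen_lines_def)
    ultimately have "P = P'" if "P \<in> l \<inter> l'" "P' \<in> l \<inter> l'" for P P'
      using distinct_queen_lines_meet_at_most_once that by blast
    then show "card (l \<inter> board n \<inter> (l' \<inter> board n)) \<le> 1"
      using finite_board by (auto simp: card_le_Suc0_iff_eq)
  qed (use fin finite_board in auto)
  also have "card (\<Union>l\<in>?L. l \<inter> board n) = cover n C"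
    by (rule cover_eq_card_UN_queen_lines[symmetric])
  finally show ?thesis
    by (simp add: card_L)
qed

lemma staircase_configuration:
  "\<exists>C. finite C \<and> card C = q \<and> non_attacking C \<and>
     (\<forall>Q\<in>C. \<bar>fst Q\<bar> \<le> int (2 * q) \<and> \<bar>snd Q\<bar> \<le> int (2 * q))"
proof (intro exI conjI)
  let ?C = "(\<lambda>i. (int i, 2 * int i)) ` {..<q}"
  show "finite ?C" by simp
  show "card ?C = q"
    by (subst card_image) (auto simp: inj_on_def)
  show "non_attacking ?C"
    by (auto simp: non_attacking_def attacked_iff queen_line_def ex_direction)
  show "\<forall>Q\<in>?C. \<bar>fst Q\<bar> \<le> int (2 * q) \<and> \<bar>snd Q\<bar> \<le> int (2 * q)"
    by auto
qed

theorem mainTheorem1: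
  fixes q :: nat
  assumes "q \<ge> 1"
  shows "\<exists>N1 :: int. \<forall>n :: nat. n \<ge> 1 \<longrightarrow> int n \<ge> N1 \<longrightarrow>
           (\<forall>C. optimal n q C \<longrightarrow> non_attacking C)"
proof -
  have main: "non_attacking C" if large: "48 * q * q + 4 * q + 1 \<le> n" and opt: "optimal n q C" for n C
  proof (rule ccontr)
    assume attacking: "\<not> non_attacking C"
    obtain C0 where C0: "finite C0" "card C0 = q" "non_attacking C0"
      and central: "\<forall>Q\<in>C0. \<bar>fst Q\<bar> \<le> int (2 * q) \<and> \<bar>snd Q\<bar> \<le> int (2 * q)"
      using staircase_configuration by blast
    have "C0 \<subseteq> board n"
      using central large by (force simp: board_def intro!: in_I_set_if_abs_le)
    then have "cover n C0 \<le> cover n C"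
      using opt C0 by (simp add: optimal_def)
    also have "\<dots> \<le> (4 * q - 1) * n"
      using opt cover_attacking_le[OF _ attacking] by (simp add: optimal_def)
    finally have "4 * q * n \<le> (4 * q - 1) * n + 4 * q * (8 * q + 1) + 4 * q * (4 * q)"
      using cover_non_attacking_ge[OF C0(1,3) central, of n] C0(2) by simp
    moreover have "(4 * q - 1) * n + n = 4 * q * n"
      using assms by (simp add: diff_mult_distrib)
    ultimately show False
      using large by (simp add: algebra_simps)
  qed
  then show ?thesis
    by (intro exI[of _ "int (48 * q * q + 4 * q + 1)"]) (simp only: of_nat_le_iff, blast)
qed

end
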